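(* Fix $p_0\in PH$. For each $n\in\mathbb N$ let $(p_n,q_n):[-n,0]\to PH\times QH$ be a (mild) solution of $$\frac{dp}{dt}+Ap=PF(p+q),\qquad \frac{dq}{dt}+Aq=QF(p+q)$$ on $[-n,0]$ with $p_n(0)=p_0$ and $q_n(-n)=0$. Then there is a subsequence $(p_{n_k},q_{n_k})$ which converges uniformly on every compact subset of $(-\infty,0]$ to a function $(p,q)$, and $u(t)=p(t)+q(t)$, $t\in(-\infty,0]$, is a solution of $u_t+Au=F(u)$ on $(-\infty,0]$ whose $Q$-component $q(t)$ is bounded on $(-\infty,0]$, with $p(0)=\lim_{k\to\infty}p_{n_k}(0)$ and $q(0)=\lim_{k\to\infty}q_{n_k}(0)$.
   Context: Standing assumptions: $H$ is a real Hilbert space with norm $|\cdot|$. $A$ is a linear, closed, unbounded, positive self-adjoint operator on $H$ with compact inverse, so $H$ has an orthonormal basis of eigenvectors of $A$ with eigenvalues $0<\lambda_1<\lambda_2\le\cdots\le\lambda_N<\lambda_{N+1}\le\cdots\to\infty$ (counted with multiplicity). $F:H\to H$ satisfies $|F(u)|\le K_0$ and $|F(u)-F(v)|\le K_1|u-v|$ for all $u,v\in H$, with constants $K_0,K_1>0$ and $K_1<\lambda_{N+1}$; moreover there is $R>0$ with $F(u)=0$ whenever $|u|\ge R$. $P$ is the orthogonal (spectral) projection onto the span of the first $N$ eigenvectors of $A$, and $Q=I-P$; every $u\in H$ is written $u=p+q$ with $p=Pu\in PH$, $q=Qu\in QH$. A solution on an interval $J$ means a continuous function satisfying the variation of constants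 formula $u(t)=e^{-A(t-s)}u(s)+\int_s^t e^{-A(t-\tau)}F(u(\tau))\,d\tau$ for all $s\le t$ in $J$. *)

theory Defs
  imports "HOL-Analysis.Analysis"
begin

text \<open>The operator A (closed, positive, self-adjoint, compact inverse) is represented by its
  spectral data: an orthonormal basis e 0, e 1, ... of eigenvectors with eigenvalues
  lam 0, lam 1, ... (0-indexed, so lam k is the paper's lambda_(k+1)), A e k = lam k e k.\<close>

definition orthonormal_basis :: "(nat \<Rightarrow> 'a::{real_inner,complete_space}) \<Rightarrow> bool" where
  "orthonormal_basis e \<longleftrightarrow>
     (\<forall>j k. e j \<bullet> e k = (if j = k then 1 else 0)) \<and>
     (\<forall>u. (\<lambda>n. \<Sum>k<n. (u \<bullet> e k) *\<^sub>R e k) \<longlonglongrightarrow> u)"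

definition spectral_data :: "(nat \<Rightarrow> 'a::{real_inner,complete_space}) \<Rightarrow> (nat \<Rightarrow> real) \<Rightarrow> nat \<Rightarrow> bool" where
  "spectral_data e lam N \<longleftrightarrow> orthonormal_basis e \<and> 0 < lam 0 \<and> lam 0 < lam 1 \<and> mono lam \<and>
     filterlim lam at_top sequentially \<and> N \<ge> 1 \<and> lam (N - 1) < lam N"

definition semigroup :: "(nat \<Rightarrow> 'a::{real_inner,complete_space}) \<Rightarrow> (nat \<Rightarrow> real) \<Rightarrow> real \<Rightarrow> 'a \<Rightarrow> 'a" where
  "semigroup e lam t u = (\<Sum>k. (exp (- lam k * t) * (u \<bullet> e k)) *\<^sub>R e k)"

definition Pproj :: "(nat \<Rightarrow> 'a::{real_inner,complete_space}) \<Rightarrow> nat \<Rightarrow> 'a \<Rightarrow> 'a" where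
  "Pproj e N u = (\<Sum>k<N. (u \<bullet> e k) *\<^sub>R e k)"

definition Qproj :: "(nat \<Rightarrow> 'a::{real_inner,complete_space}) \<Rightarrow> nat \<Rightarrow> 'a \<Rightarrow> 'a" where
  "Qproj e N u = u - Pproj e N u"

definition nonlinearity :: "(nat \<Rightarrow> real) \<Rightarrow> nat \<Rightarrow> ('a::real_normed_vector \<Rightarrow> 'a) \<Rightarrow> real \<Rightarrow> real \<Rightarrow> real \<Rightarrow> bool" where
  "nonlinearity lam N F K0 K1 R \<longleftrightarrow> K0 > 0 \<and> K1 > 0 \<and> K1 < lam N \<and> R > 0 \<and>
     (\<forall>u. norm (F u) \<le> K0) \<and> (\<forall>u v. norm (F u - F v) \<le> K1 * norm (u - v)) \<and>
     (\<forall>u. norm u \<ge> R \<longrightarrow> F u = 0)"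

text \<open>Mild solution of u_t + A u = F(u) on the interval J (variation of constants formula).\<close>
definition mild_solution :: "(nat \<Rightarrow> 'a::{real_inner,complete_space}) \<Rightarrow> (nat \<Rightarrow> real) \<Rightarrow> ('a \<Rightarrow> 'a)
    \<Rightarrow> real set \<Rightarrow> (real \<Rightarrow> 'a) \<Rightarrow> bool" where
  "mild_solution e lam F J u \<longleftrightarrow> continuous_on J u \<and>
     (\<forall>s\<in>J. \<forall>t\<in>J. s \<le> t \<longrightarrow>
        ((\<lambda>\<tau>. semigroup e lam (t - \<tau>) (F (u \<tau>))) has_integral
           (u t - semigroup e lam (t - s) (u s))) {s..t})"

definition mild_solution_PQ :: "(nat \<Rightarrow> 'a::{real_inner,complete_space}) \<Rightarrow> (nat \<Rightarrow> real) \<Rightarrow> nat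
    \<Rightarrow> ('a \<Rightarrow> 'a) \<Rightarrow> real set \<Rightarrow> (real \<Rightarrow> 'a) \<Rightarrow> (real \<Rightarrow> 'a) \<Rightarrow> bool" where
  "mild_solution_PQ e lam N F J p q \<longleftrightarrow>
     (\<forall>t\<in>J. Pproj e N (p t) = p t \<and> Qproj e N (q t) = q t) \<and>
     continuous_on J p \<and> continuous_on J q \<and>
     (\<forall>s\<in>J. \<forall>t\<in>J. s \<le> t \<longrightarrow>
        ((\<lambda>\<tau>. semigroup e lam (t - \<tau>) (Pproj e N (F (p \<tau> + q \<tau>)))) has_integral
           (p t - semigroup e lam (t - s) (p s))) {s..t} \<and>
        ((\<lambda>\<tau>. semigroup e lam (t - \<tau>) (Qproj e N (F (p \<tau> + q \<tau>)))) has_integral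
           (q t - semigroup e lam (t - s) (q s))) {s..t})"

end

theory Submission
  imports Defs "HOL-Complex_Analysis.Great_Picard"
begin

text \<open>The \<open>Q\<close>-components are bounded uniformly in \<open>n\<close>: \<open>qn n\<close> starts from \<open>0\<close> at time \<open>-n\<close> and
  the semigroup damps \<open>QH\<close> at rate \<open>lam N\<close>, so \<open>|qn n t| \<le> K0 / lam N\<close>. The \<open>P\<close>-components are
  integrated backwards from the common value \<open>p0\<close> at time \<open>0\<close> and grow at most like
  \<open>exp (lam N * |t|)\<close>. Hence \<open>U n = pn n + qn n\<close> is bounded on \<open>[-m, 0]\<close> uniformly in \<open>n \<ge> m\<close>,
  the family is equicontinuous there, and its modes beyond any \<open>M\<close> are uniformly small, being
  damped by \<open>exp (- lam M * h)\<close> over a time window of length \<open>h\<close>. A diagonal subsequence along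
  which every coordinate converges at every point of a countable grid is therefore uniformly Cauchy
  on each \<open>[-m, 0]\<close>. Since \<open>F\<close> is Lipschitz, the limit satisfies the variation of constants
  formula, and it inherits the bound on its \<open>Q\<close>-component.\<close>

lemma summable_Cauchy_complete:
  fixes f :: "nat \<Rightarrow> 'a::{real_normed_vector,complete_space}"
  assumes "\<And>\<epsilon>. \<epsilon> > 0 \<Longrightarrow> \<exists>M. \<forall>m\<ge>M. \<forall>n. norm (sum f {m..<n}) < \<epsilon>"
  shows "summable f"
  unfolding summable_iff_convergent Cauchy_convergent_iff [symmetric] Cauchy_iff
proof clarify
  fix \<epsilon> :: real
  assume "0 < \<epsilon>"
  with assms obtain M where M: "\<And>m n. m \<ge> M \<Longrightarrow> norm (sum f {m..<n}) < \<epsilon>"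
    by blast
  have "norm (sum f {..<m} - sum f {..<n}) < \<epsilon>" if "m \<ge> M" "n \<ge> M" for m n
  proof (cases m n rule: le_cases)
    case le
    then show ?thesis
      by (metis M finite_lessThan lessThan_minus_lessThan lessThan_subset_iff norm_minus_commute
          sum_diff \<open>m \<ge> M\<close>)
  next
    case ge
    then show ?thesis
      by (metis M finite_lessThan lessThan_minus_lessThan lessThan_subset_iff sum_diff \<open>n \<ge> M\<close>)
  qed
  then show "\<exists>M. \<forall>m\<ge>M. \<forall>n\<ge>M. norm (sum f {..<m} - sum f {..<n}) < \<epsilon>"
    by blast
qed

lemma has_integral_inner_left:
  "(f has_integral I) S \<Longrightarrow> ((\<lambda>x. f x \<bullet> v) has_integral (I \<bullet> v)) S"
  using has_integral_linear[OF _ bounded_linear_inner_left, of f I S v] by (simp add: o_def)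

lemma norm_has_integral_le:
  fixes f :: "real \<Rightarrow> 'a::real_normed_vector"
  assumes "(f has_integral I) {s..t}" "s \<le> t" "K \<ge> 0" "\<And>x. x \<in> {s..t} \<Longrightarrow> norm (f x) \<le> K"
  shows "norm I \<le> K * (t - s)"
  using has_integral_bound_real[of K "{}" f I s t] assms by simp

lemma has_integral_exp_decay:
  fixes a C s t :: real
  assumes "s \<le> t" and "a > 0"
  shows "((\<lambda>x. C * exp (- a * (t - x))) has_integral (C * (1 - exp (- a * (t - s))) / a)) {s..t}"
proof -
  have "((\<lambda>x. C * exp (- a * (t - x))) has_integral
     ((\<lambda>x. C * exp (- a * (t - x)) / a) t - (\<lambda>x. C * exp (- a * (t - x)) / a) s)) {s..t}"
    using assms
    by (intro fundamental_theorem_of_calculus)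
      (auto intro!: derivative_eq_intros simp: has_real_derivative_iff_has_vector_derivative[symmetric])
  then show ?thesis
    by (simp add: diff_divide_distrib right_diff_distrib)
qed

text \<open>Pairing the integrand with the integral \<open>I\<close> reduces the estimate to the scalar integral
  of the weight.\<close>
lemma norm_has_integral_le_exp_decay:
  fixes f :: "real \<Rightarrow> 'a::real_inner"
  assumes I: "(f has_integral I) {s..t}" and "s \<le> t" "a > 0" "K \<ge> 0"
    and f: "\<And>x. x \<in> {s..t} \<Longrightarrow> norm (f x) \<le> K * exp (- a * (t - x))"
  shows "norm I \<le> K / a"
proof -
  have "I \<bullet> I \<le> (K * norm I) * (1 - exp (- a * (t - s))) / a"
  proof (rule has_integral_le[OF has_integral_inner_left[OF I] has_integral_exp_decay])
    fix x assume x: "x \<in> {s..t}"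
    have "f x \<bullet> I \<le> norm (f x) * norm I"
      by (rule norm_cauchy_schwarz)
    also have "\<dots> \<le> (K * exp (- a * (t - x))) * norm I"
      using f[OF x] by (simp add: mult_right_mono)
    finally show "f x \<bullet> I \<le> (K * norm I) * exp (- a * (t - x))"
      by (simp add: algebra_simps)
  qed (use assms in auto)
  also have "\<dots> \<le> (K * norm I) / a"
    using assms by (intro divide_right_mono mult_right_le_one_le) auto
  also have "\<dots> = (K / a) * norm I"
    by simp
  finally have "norm I * norm I \<le> (K / a) * norm I"
    by (simp add: power2_eq_square[symmetric] power2_norm_eq_inner)
  then show ?thesis
    using assms mult_right_le_imp_le[of "norm I" "norm I" "K / a"] by (cases "norm I = 0") auto
qed

lemma has_integral_uniform_limit:
  fixes f :: "nat \<Rightarrow> real \<Rightarrow> 'a::real_normed_vector"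
  assumes f: "\<forall>\<^sub>F n in sequentially. (f n has_integral I n) {s..t}"
    and fg: "uniform_limit {s..t} f g sequentially" and IJ: "I \<longlonglongrightarrow> J"
  shows "(g has_integral J) {s..t}"
  unfolding box_real(2)[symmetric] has_integral
proof (intro allI impI)
  fix \<epsilon> :: real assume "\<epsilon> > 0"
  define c where "c = measure lborel (cbox s t)"
  define \<delta> where "\<delta> = \<epsilon> / 3 / (c + 1)"
  have "c \<ge> 0"
    by (simp add: c_def)
  then have "\<delta> > 0" "\<delta> * c < \<epsilon> / 3"
    using \<open>\<epsilon> > 0\<close> by (auto simp: \<delta>_def field_simps)
  have "\<forall>\<^sub>F n in sequentially. (f n has_integral I n) {s..t} \<and>
      (\<forall>x\<in>{s..t}. dist (f n x) (g x) < \<delta>) \<and> dist (I n) J < \<epsilon> / 3"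
    using f uniform_limitD[OF fg \<open>\<delta> > 0\<close>] tendstoD[OF IJ, of "\<epsilon> / 3"] \<open>\<epsilon> > 0\<close>
    by (intro eventually_conj) auto
  then obtain n where fI: "(f n has_integral I n) (cbox s t)"
    and fn: "\<forall>x\<in>cbox s t. norm (f n x - g x) \<le> \<delta>" and In: "norm (I n - J) < \<epsilon> / 3"
    unfolding eventually_sequentially by (force simp: dist_norm)
  obtain \<gamma> where "gauge \<gamma>" and \<gamma>: "\<And>\<D>. \<D> tagged_division_of cbox s t \<Longrightarrow> \<gamma> fine \<D> \<Longrightarrow>
      norm ((\<Sum>(x,K)\<in>\<D>. measure lborel K *\<^sub>R f n x) - I n) < \<epsilon> / 3"
    using fI[unfolded has_integral] \<open>\<epsilon> > 0\<close>
    by (meson divide_pos_pos zero_less_numeral)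
  show "\<exists>\<gamma>. gauge \<gamma> \<and> (\<forall>\<D>. \<D> tagged_division_of cbox s t \<and> \<gamma> fine \<D> \<longrightarrow>
      norm ((\<Sum>(x,K)\<in>\<D>. measure lborel K *\<^sub>R g x) - J) < \<epsilon>)"
  proof (intro exI conjI allI impI)
    fix \<D> assume \<D>: "\<D> tagged_division_of cbox s t \<and> \<gamma> fine \<D>"
    have "norm ((\<Sum>(x,K)\<in>\<D>. measure lborel K *\<^sub>R g x) - (\<Sum>(x,K)\<in>\<D>. measure lborel K *\<^sub>R f n x))
        < \<epsilon> / 3"
      using rsum_diff_bound[of \<D> s t "f n" g \<delta>] \<D> fn \<open>\<delta> * c < \<epsilon> / 3\<close>
      by (simp add: c_def norm_minus_commute)
    from norm_diff_triangle_less[OF norm_diff_triangle_less[OF this \<gamma>] In] \<D>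
    show "norm ((\<Sum>(x,K)\<in>\<D>. measure lborel K *\<^sub>R g x) - J) < \<epsilon>"
      by simp
  qed (rule \<open>gauge \<gamma>\<close>)
qed

section \<open>Orthonormal expansions\<close>

locale onb =
  fixes e :: "nat \<Rightarrow> 'a::{real_inner,complete_space}"
  assumes orthonormal_basis: "orthonormal_basis e"
begin

lemma inner_basis: "e j \<bullet> e k = (if j = k then 1 else 0)"
  using orthonormal_basis unfolding orthonormal_basis_def by blast

lemma norm_basis [simp]: "norm (e k) = 1"
  using inner_basis[of k k] by (simp add: norm_eq_sqrt_inner)

lemma basis_expansion: "(\<lambda>n. \<Sum>k<n. (u \<bullet> e k) *\<^sub>R e k) \<longlonglongrightarrow> u"
  using orthonormal_basis unfolding orthonormal_basis_def by blast

lemma inner_sum_basis: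
  "finite A \<Longrightarrow> (\<Sum>k\<in>A. a k *\<^sub>R e k) \<bullet> e j = (if j \<in> A then a j else 0)"
  by (simp add: inner_sum_left inner_basis if_distrib cong: if_cong)

lemma norm_sum_basis_squared:
  assumes "finite A"
  shows "(norm (\<Sum>k\<in>A. a k *\<^sub>R e k))\<^sup>2 = (\<Sum>k\<in>A. (a k)\<^sup>2)"
proof -
  have "(norm (\<Sum>k\<in>A. a k *\<^sub>R e k))\<^sup>2 = (\<Sum>j\<in>A. a j * (e j \<bullet> (\<Sum>k\<in>A. a k *\<^sub>R e k)))"
    by (simp only: power2_norm_eq_inner inner_sum_left inner_scaleR_left)
  also have "\<dots> = (\<Sum>j\<in>A. (a j)\<^sup>2)"
    using assms by (intro sum.cong) (auto simp: inner_commute[of "e _"] inner_sum_basis power2_eq_square)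
  finally show ?thesis .
qed

lemma parseval: "(\<lambda>k. (u \<bullet> e k)\<^sup>2) sums (norm u)\<^sup>2"
proof -
  have "(\<lambda>n. (norm (\<Sum>k<n. (u \<bullet> e k) *\<^sub>R e k))\<^sup>2) \<longlonglongrightarrow> (norm u)\<^sup>2"
    by (intro tendsto_intros basis_expansion)
  then show ?thesis
    unfolding sums_def by (simp add: norm_sum_basis_squared)
qed

lemma basis_eqI:
  assumes "\<And>k. u \<bullet> e k = v \<bullet> e k"
  shows "u = v"
proof -
  have "(\<lambda>k. 0) sums (norm (u - v))\<^sup>2"
    using parseval[of "u - v"] assms by (simp add: inner_diff_left)
  then show ?thesis
    using sums_unique2[OF _ sums_zero] by fastforce
qed

lemma norm_le_by_coordinates:
  assumes "C \<ge> 0" and coords: "\<And>k. \<bar>w \<bullet> e k\<bar> \<le> C * \<bar>v \<bullet> e k\<bar>"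
  shows "norm w \<le> C * norm v"
proof -
  have "(w \<bullet> e k)\<^sup>2 \<le> C\<^sup>2 * (v \<bullet> e k)\<^sup>2" for k
    using power_mono[OF coords abs_ge_zero, of k 2] by (simp add: power_mult_distrib)
  then have "(norm w)\<^sup>2 \<le> C\<^sup>2 * (norm v)\<^sup>2"
    by (rule sums_le[OF _ parseval sums_mult[OF parseval]])
  then show ?thesis
    using assms(1) by (simp add: power_mult_distrib[symmetric] power2_le_iff_abs_le)
qed

text \<open>The domination makes the series converge, so \<open>suminf\<close> is not a junk value here.\<close>
lemma inner_basis_series:
  assumes "\<And>k. \<bar>a k\<bar> \<le> \<bar>u \<bullet> e k\<bar>"
  shows "(\<Sum>k. a k *\<^sub>R e k) \<bullet> e j = a j"
proof -
  have square_summable: "summable (\<lambda>k. (a k)\<^sup>2)"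
    using assms by (intro summable_comparison_test[OF _ sums_summable[OF parseval[of u]]])
      (auto simp: abs_le_square_iff)
  have "summable (\<lambda>k. a k *\<^sub>R e k)"
  proof (rule summable_Cauchy_complete)
    fix \<epsilon> :: real assume "\<epsilon> > 0"
    then obtain M where M: "\<And>m n. m \<ge> M \<Longrightarrow> norm (\<Sum>k=m..<n. (a k)\<^sup>2) < \<epsilon>\<^sup>2"
      using square_summable unfolding summable_Cauchy by (meson zero_less_power)
    have "norm (\<Sum>k=m..<n. a k *\<^sub>R e k) < \<epsilon>" if "m \<ge> M" for m n
    proof -
      have "(norm (\<Sum>k=m..<n. a k *\<^sub>R e k))\<^sup>2 \<le> norm (\<Sum>k=m..<n. (a k)\<^sup>2)"
        by (simp add: norm_sum_basis_squared)
      then show ?thesis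
        using M[OF that, of n] \<open>\<epsilon> > 0\<close> by (smt (verit) power_less_imp_less_base)
    qed
    then show "\<exists>M. \<forall>m\<ge>M. \<forall>n. norm (\<Sum>k=m..<n. a k *\<^sub>R e k) < \<epsilon>"
      by blast
  qed
  then have "(\<lambda>k. (a k *\<^sub>R e k) \<bullet> e j) sums ((\<Sum>k. a k *\<^sub>R e k) \<bullet> e j)"
    by (intro bounded_linear.sums[OF bounded_linear_inner_left] summable_sums)
  moreover have "(\<lambda>k. (a k *\<^sub>R e k) \<bullet> e j) sums a j"
    using sums_single[of j "\<lambda>_. a j"] by (simp add: inner_basis if_distrib cong: if_cong)
  ultimately show ?thesis
    by (rule sums_unique2)
qed

lemma inner_Pproj_basis: "Pproj e M u \<bullet> e j = (if j < M then u \<bullet> e j else 0)"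
  unfolding Pproj_def by (simp add: inner_sum_basis)

lemma inner_Qproj_basis: "Qproj e M u \<bullet> e j = (if j < M then 0 else u \<bullet> e j)"
  unfolding Qproj_def by (simp add: inner_diff_left inner_Pproj_basis)

lemma Pproj_add_Qproj: "Pproj e M u + Qproj e M u = u"
  unfolding Qproj_def by simp

lemma norm_Pproj_le: "norm (Pproj e M u) \<le> norm u"
  using norm_le_by_coordinates[of 1 "Pproj e M u" u] by (simp add: inner_Pproj_basis)

lemma norm_Qproj_le: "norm (Qproj e M u) \<le> norm u"
  using norm_le_by_coordinates[of 1 "Qproj e M u" u] by (simp add: inner_Qproj_basis)

lemma norm_Pproj_le_sum: "norm (Pproj e M u) \<le> (\<Sum>k<M. \<bar>u \<bullet> e k\<bar>)"
  unfolding Pproj_def by (rule order_trans[OF norm_sum]) simp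

lemma norm_le_sum_coordinates_Qproj: "norm u \<le> (\<Sum>k<M. \<bar>u \<bullet> e k\<bar>) + norm (Qproj e M u)"
  using norm_triangle_ineq[of "Pproj e M u" "Qproj e M u"] norm_Pproj_le_sum[of M u]
  by (simp add: Pproj_add_Qproj)

lemma bounded_linear_Pproj: "bounded_linear (Pproj e M)"
  by (rule bounded_linear_intro[of _ 1])
    (auto intro: basis_eqI simp: inner_Pproj_basis inner_add_left norm_Pproj_le)

lemma bounded_linear_Qproj: "bounded_linear (Qproj e M)"
  by (rule bounded_linear_intro[of _ 1])
    (auto intro: basis_eqI simp: inner_Qproj_basis inner_add_left norm_Qproj_le)

lemmas Pproj_add = linear_add[OF bounded_linear.linear[OF bounded_linear_Pproj]]
  and Qproj_add = linear_add[OF bounded_linear.linear[OF bounded_linear_Qproj]]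
  and Qproj_diff = linear_diff[OF bounded_linear.linear[OF bounded_linear_Qproj]]

lemma Qproj_Pproj: "N \<le> M \<Longrightarrow> Qproj e M (Pproj e N u) = 0"
  by (rule basis_eqI) (simp add: inner_Qproj_basis inner_Pproj_basis)

lemma Pproj_Qproj: "Pproj e N (Qproj e N u) = 0"
  by (rule basis_eqI) (simp add: inner_Qproj_basis inner_Pproj_basis)

end

section \<open>The semigroup\<close>

locale spectral =
  fixes e :: "nat \<Rightarrow> 'a::{real_inner,complete_space}" and lam :: "nat \<Rightarrow> real" and N :: nat
  assumes spectral_data: "spectral_data e lam N"
begin

sublocale onb e
  using spectral_data by unfold_locales (simp add: spectral_data_def)

lemma lam_mono: "j \<le> k \<Longrightarrow> lam j \<le> lam k"
  using spectral_data unfolding spectral_data_def by (auto dest: monoD)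

lemma lam_pos: "lam k > 0"
  using spectral_data lam_mono[of 0 k] unfolding spectral_data_def by auto

lemma lam_at_top: "filterlim lam at_top sequentially"
  using spectral_data unfolding spectral_data_def by blast

abbreviation S where "S \<equiv> semigroup e lam"

lemma exp_neg_lam_le_1: "h \<ge> 0 \<Longrightarrow> exp (- lam k * h) \<le> 1"
  using lam_pos[of k] by simp

lemma inner_semigroup_basis:
  assumes "h \<ge> 0"
  shows "S h u \<bullet> e j = exp (- lam j * h) * (u \<bullet> e j)"
  unfolding semigroup_def
  by (rule inner_basis_series[where u = u])
    (use exp_neg_lam_le_1[OF assms] in \<open>simp add: abs_mult mult_left_le_one_le\<close>)

lemma bounded_linear_semigroup:
  assumes "h \<ge> 0"
  shows "bounded_linear (S h)"
proof (rule bounded_linear_intro[of _ 1])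
  show "norm (S h u) \<le> norm u * 1" for u
    using norm_le_by_coordinates[of 1 "S h u" u] assms exp_neg_lam_le_1[OF assms]
    by (simp add: inner_semigroup_basis abs_mult mult_left_le_one_le)
qed (use assms in \<open>auto intro!: basis_eqI simp: inner_semigroup_basis algebra_simps\<close>)

lemmas semigroup_add = linear_add[OF bounded_linear.linear[OF bounded_linear_semigroup]]
  and semigroup_diff = linear_diff[OF bounded_linear.linear[OF bounded_linear_semigroup]]
  and semigroup_zero = linear_0[OF bounded_linear.linear[OF bounded_linear_semigroup]]

lemma norm_semigroup_le: "h \<ge> 0 \<Longrightarrow> norm (S h u) \<le> norm u"
  using norm_le_by_coordinates[of 1 "S h u" u] exp_neg_lam_le_1
  by (simp add: inner_semigroup_basis abs_mult mult_left_le_one_le)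

lemma Qproj_semigroup: "h \<ge> 0 \<Longrightarrow> Qproj e M (S h u) = S h (Qproj e M u)"
  by (rule basis_eqI) (simp add: inner_Qproj_basis inner_semigroup_basis)

lemma norm_Qproj_semigroup_le:
  assumes "h \<ge> 0"
  shows "norm (Qproj e M (S h u)) \<le> exp (- lam M * h) * norm u"
proof (rule norm_le_by_coordinates)
  fix k
  have "exp (- lam k * h) \<le> exp (- lam M * h)" if "\<not> k < M"
    using lam_mono[of M k] that assms by (simp add: mult_right_mono)
  then show "\<bar>Qproj e M (S h u) \<bullet> e k\<bar> \<le> exp (- lam M * h) * \<bar>u \<bullet> e k\<bar>"
    using assms by (simp add: inner_Qproj_basis inner_semigroup_basis abs_mult mult_right_mono)
qed simp

lemma norm_Pproj_semigroup_minus_le: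
  assumes "h \<ge> 0"
  shows "norm (Pproj e M (S h u - u)) \<le> (lam M * h) * norm u"
proof (rule norm_le_by_coordinates)
  fix k
  have "\<bar>exp (- lam k * h) - 1\<bar> \<le> lam M * h" if "k < M"
  proof -
    have "\<bar>exp (- (lam k * h)) - 1\<bar> \<le> lam k * h"
      using exp_ge_add_one_self[of "- (lam k * h)"] exp_neg_lam_le_1[OF assms, of k]
        lam_pos[of k] assms
      by (auto simp: abs_le_iff)
    also have "\<dots> \<le> lam M * h"
      using lam_mono[of k M] that assms by (simp add: mult_right_mono)
    finally show ?thesis
      by simp
  qed
  then have "k < M \<Longrightarrow> \<bar>(exp (- lam k * h) - 1) * (u \<bullet> e k)\<bar> \<le> (lam M * h) * \<bar>u \<bullet> e k\<bar>"
    by (simp add: abs_mult mult_right_mono)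
  then show "\<bar>Pproj e M (S h u - u) \<bullet> e k\<bar> \<le> (lam M * h) * \<bar>u \<bullet> e k\<bar>"
    using assms lam_pos[of M]
    by (simp add: inner_Pproj_basis inner_semigroup_basis inner_diff_left algebra_simps)
qed (use assms lam_pos[of M] in simp)

lemma norm_Qproj_semigroup_minus_le:
  assumes "h \<ge> 0"
  shows "norm (Qproj e M (S h u - u)) \<le> norm (Qproj e M u)"
proof -
  have "\<bar>Qproj e M (S h u - u) \<bullet> e k\<bar> \<le> 1 * \<bar>Qproj e M u \<bullet> e k\<bar>" for k
  proof -
    have "\<bar>exp (- lam k * h) - 1\<bar> \<le> 1"
      using exp_neg_lam_le_1[OF assms, of k] by simp
    then have "\<bar>(exp (- lam k * h) - 1) * (u \<bullet> e k)\<bar> \<le> \<bar>u \<bullet> e k\<bar>"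
      by (simp add: abs_mult mult_left_le_one_le)
    then show ?thesis
      using assms by (simp add: inner_Qproj_basis inner_semigroup_basis inner_diff_left algebra_simps)
  qed
  then show ?thesis
    using norm_le_by_coordinates[of 1] by simp
qed

end

section \<open>A priori estimates for the approximating solutions\<close>

locale approximating_solutions = spectral e lam N
  for e :: "nat \<Rightarrow> 'a::{real_inner,complete_space}" and lam N +
  fixes F :: "'a \<Rightarrow> 'a" and K0 K1 R :: real and p0 :: 'a and pn qn :: "nat \<Rightarrow> real \<Rightarrow> 'a"
  assumes nonlinearity: "nonlinearity lam N F K0 K1 R"
    and solution: "\<And>n. mild_solution_PQ e lam N F {- real n..0} (pn n) (qn n)"
    and pn_0: "\<And>n. pn n 0 = p0"
    and qn_start: "\<And>n. qn n (- real n) = 0"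
begin

definition U :: "nat \<Rightarrow> real \<Rightarrow> 'a" where "U n t = pn n t + qn n t"

lemma K0_pos: "K0 > 0" and K1_pos: "K1 > 0" and norm_F_le: "norm (F u) \<le> K0"
  and F_lipschitz: "norm (F u - F v) \<le> K1 * norm (u - v)"
  using nonlinearity unfolding nonlinearity_def by auto

lemma Pproj_pn: "t \<in> {- real n..0} \<Longrightarrow> Pproj e N (pn n t) = pn n t"
  and Qproj_qn: "t \<in> {- real n..0} \<Longrightarrow> Qproj e N (qn n t) = qn n t"
  and continuous_on_pn: "continuous_on {- real n..0} (pn n)"
  and continuous_on_qn: "continuous_on {- real n..0} (qn n)"
  using solution[of n] unfolding mild_solution_PQ_def by auto

lemma Pproj_U:
  assumes "t \<in> {- real n..0}"
  shows "Pproj e N (U n t) = pn n t"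
  using Pproj_Qproj[of N "qn n t"] Pproj_pn[OF assms] Qproj_qn[OF assms] by (simp add: U_def Pproj_add)

lemma Qproj_U:
  assumes "t \<in> {- real n..0}"
  shows "Qproj e N (U n t) = qn n t"
  using Qproj_Pproj[of N N "pn n t"] Pproj_pn[OF assms] Qproj_qn[OF assms] by (simp add: U_def Qproj_add)

lemma Qproj_U_high:
  assumes "M \<ge> N" "t \<in> {- real n..0}"
  shows "Qproj e M (U n t) = Qproj e M (qn n t)"
  using Qproj_Pproj[OF assms(1), of "pn n t"] Pproj_pn[OF assms(2)] by (simp add: U_def Qproj_add)

context
  fixes n s t
  assumes s: "s \<in> {- real n..0}" and t: "t \<in> {- real n..0}" and "s \<le> t"
begin

lemma has_integral_qn:
  "((\<lambda>\<tau>. S (t - \<tau>) (Qproj e N (F (U n \<tau>)))) has_integral (qn n t - S (t - s) (qn n s))) {s..t}"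
  using solution[of n] s t \<open>s \<le> t\<close> unfolding mild_solution_PQ_def U_def by blast

lemma has_integral_U:
  "((\<lambda>\<tau>. S (t - \<tau>) (F (U n \<tau>))) has_integral (U n t - S (t - s) (U n s))) {s..t}"
proof -
  have "((\<lambda>\<tau>. S (t - \<tau>) (Pproj e N (F (U n \<tau>))) + S (t - \<tau>) (Qproj e N (F (U n \<tau>))))
      has_integral ((pn n t - S (t - s) (pn n s)) + (qn n t - S (t - s) (qn n s)))) {s..t}"
    using solution[of n] s t \<open>s \<le> t\<close> unfolding mild_solution_PQ_def U_def
    by (intro has_integral_add) blast+
  also have "(pn n t - S (t - s) (pn n s)) + (qn n t - S (t - s) (qn n s)) = U n t - S (t - s) (U n s)"
    using \<open>s \<le> t\<close> by (simp add: U_def semigroup_add)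
  finally show ?thesis
  proof (rule has_integral_eq[rotated])
    fix \<tau> assume "\<tau> \<in> {s..t}"
    then show "S (t - \<tau>) (Pproj e N (F (U n \<tau>))) + S (t - \<tau>) (Qproj e N (F (U n \<tau>)))
        = S (t - \<tau>) (F (U n \<tau>))"
      using semigroup_add[of "t - \<tau>" "Pproj e N (F (U n \<tau>))" "Qproj e N (F (U n \<tau>))"]
      by (simp add: Pproj_add_Qproj)
  qed
qed

end

lemma norm_semigroup_F_le: "h \<ge> 0 \<Longrightarrow> norm (S h (F u)) \<le> K0"
  using norm_semigroup_le[of h "F u"] norm_F_le[of u] by linarith

lemma norm_semigroup_Qproj_F_le: "h \<ge> 0 \<Longrightarrow> norm (S h (Qproj e N (F u))) \<le> K0"
  using norm_semigroup_le[of h "Qproj e N (F u)"] norm_Qproj_le[of N "F u"] norm_F_le[of u] by linarith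

lemma dist_semigroup_F_le: "h \<ge> 0 \<Longrightarrow> dist (S h (F v)) (S h (F w)) \<le> K1 * dist v w"
  using norm_semigroup_le[of h "F v - F w"] F_lipschitz[of v w]
  by (simp add: dist_norm semigroup_diff)

lemma norm_qn_le:
  assumes t: "t \<in> {- real n..0}"
  shows "norm (qn n t) \<le> K0 / lam N"
proof (rule norm_has_integral_le_exp_decay)
  show "((\<lambda>\<tau>. S (t - \<tau>) (Qproj e N (F (U n \<tau>)))) has_integral qn n t) {- real n..t}"
    using has_integral_qn[of "- real n" n t] t by (simp add: qn_start semigroup_zero)
  fix x assume x: "x \<in> {- real n..t}"
  have "norm (S (t - x) (Qproj e N (F (U n x)))) \<le> exp (- lam N * (t - x)) * norm (F (U n x))"
    using x norm_Qproj_semigroup_le[of "t - x" N "F (U n x)"] by (simp add: Qproj_semigroup)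
  also have "\<dots> \<le> exp (- lam N * (t - x)) * K0"
    by (intro mult_left_mono norm_F_le) simp
  finally show "norm (S (t - x) (Qproj e N (F (U n x)))) \<le> K0 * exp (- lam N * (t - x))"
    by (simp add: mult.commute)
qed (use t K0_pos lam_pos[of N] in simp_all)

text \<open>Low modes are estimated backwards from the common value \<open>U n 0 = p0\<close> on \<open>PH\<close>, at the
  price of the growth factor \<open>exp (lam N * |t|)\<close>.\<close>
lemma inner_U_low_le:
  assumes t: "t \<in> {- real n..0}" and "k < N"
  shows "\<bar>U n t \<bullet> e k\<bar> \<le> exp (lam N * - t) * (norm p0 + K0 * - t)"
proof -
  have "t \<le> 0"
    using t by simp
  have "norm ((U n 0 - S (0 - t) (U n t)) \<bullet> e k) \<le> K0 * (0 - t)"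
  proof (rule norm_has_integral_le[OF has_integral_inner_left[OF has_integral_U[OF t]]])
    fix x assume "x \<in> {t..0}"
    have "norm (S (0 - x) (F (U n x)) \<bullet> e k) \<le> norm (S (0 - x) (F (U n x)))"
      using Cauchy_Schwarz_ineq2[of "S (0 - x) (F (U n x))" "e k"] by simp
    also have "\<dots> \<le> K0"
      using \<open>x \<in> {t..0}\<close> by (intro norm_semigroup_F_le) simp
    finally show "norm (S (0 - x) (F (U n x)) \<bullet> e k) \<le> K0" .
  qed (use \<open>t \<le> 0\<close> K0_pos in auto)
  moreover have "U n 0 \<bullet> e k = p0 \<bullet> e k"
    using Qproj_qn[of 0 n] \<open>k < N\<close> inner_Qproj_basis[of N "qn n 0" k]
    by (simp add: U_def pn_0 inner_add_left)
  moreover have "\<bar>p0 \<bullet> e k\<bar> \<le> norm p0"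
    using Cauchy_Schwarz_ineq2[of p0 "e k"] by simp
  ultimately have "exp (lam k * t) * \<bar>U n t \<bullet> e k\<bar> \<le> norm p0 + K0 * - t"
    using \<open>t \<le> 0\<close> by (simp add: inner_diff_left inner_semigroup_basis abs_mult)
  then have "\<bar>U n t \<bullet> e k\<bar> \<le> exp (lam k * - t) * (norm p0 + K0 * - t)"
    by (simp add: exp_minus field_simps)
  also have "\<dots> \<le> exp (lam N * - t) * (norm p0 + K0 * - t)"
    using lam_mono[of k N] \<open>k < N\<close> \<open>t \<le> 0\<close> K0_pos mult_nonneg_nonpos[of K0 t]
      mult_right_mono_neg[of "lam k" "lam N" t]
    by (intro mult_right_mono add_nonneg_nonneg) auto
  finally show ?thesis .
qed

definition U_bound :: "real \<Rightarrow> real" where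
  "U_bound m = real N * exp (lam N * m) * (norm p0 + K0 * m) + K0 / lam N"

lemma U_bound_pos: "m \<ge> 0 \<Longrightarrow> U_bound m > 0"
  unfolding U_bound_def using K0_pos lam_pos[of N] by (intro add_nonneg_pos) auto

lemma norm_U_le:
  assumes t: "t \<in> {- m..0}" and "m \<le> real n"
  shows "norm (U n t) \<le> U_bound m"
proof -
  have tn: "t \<in> {- real n..0}"
    using assms by simp
  have low_modes: "\<bar>U n t \<bullet> e k\<bar> \<le> exp (lam N * m) * (norm p0 + K0 * m)" if "k < N" for k
  proof -
    have "\<bar>U n t \<bullet> e k\<bar> \<le> exp (lam N * - t) * (norm p0 + K0 * - t)"
      by (rule inner_U_low_le[OF tn that])
    also have "\<dots> \<le> exp (lam N * m) * (norm p0 + K0 * m)"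
    proof (rule mult_mono)
      show "exp (lam N * - t) \<le> exp (lam N * m)" "norm p0 + K0 * - t \<le> norm p0 + K0 * m"
        using t K0_pos lam_pos[of N] mult_left_mono[of "- t" m "lam N"] mult_left_mono[of "- t" m K0]
        by simp_all
      show "0 \<le> norm p0 + K0 * - t"
        using t K0_pos by (intro add_nonneg_nonneg) (auto simp: mult_nonneg_nonpos)
    qed simp
    finally show ?thesis .
  qed
  have "norm (Pproj e N (U n t)) \<le> (\<Sum>k<N. \<bar>U n t \<bullet> e k\<bar>)"
    by (rule norm_Pproj_le_sum)
  also have "\<dots> \<le> (\<Sum>k<N. exp (lam N * m) * (norm p0 + K0 * m))"
    by (rule sum_mono) (simp add: low_modes)
  finally have "norm (Pproj e N (U n t)) \<le> real N * exp (lam N * m) * (norm p0 + K0 * m)"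
    by simp
  moreover have "norm (Qproj e N (U n t)) \<le> K0 / lam N"
    using norm_qn_le[OF tn] Qproj_U[OF tn] by simp
  ultimately show ?thesis
    using norm_triangle_ineq[of "Pproj e N (U n t)" "Qproj e N (U n t)"]
    by (simp add: Pproj_add_Qproj U_bound_def)
qed

text \<open>Over a time window of length \<open>h\<close> the modes from \<open>M\<close> on are damped by \<open>exp (- lam M * h)\<close>,
  while the forcing contributes at most \<open>K0 * h\<close>.\<close>
lemma norm_Qproj_U_le:
  assumes M: "M \<ge> N" and "h > 0" and t: "t \<in> {- real n..0}"
  shows "norm (Qproj e M (U n t)) \<le> exp (- lam M * h) * (K0 / lam N) + K0 * h"
proof (cases "t - h \<ge> - real n")
  case True
  define s where "s = t - h"
  have s: "s \<in> {- real n..0}" and "s \<le> t"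
    using True t \<open>h > 0\<close> by (auto simp: s_def)
  have "norm (qn n t - S h (qn n s)) \<le> K0 * (t - s)"
    using norm_has_integral_le[OF has_integral_qn[OF s t \<open>s \<le> t\<close>] \<open>s \<le> t\<close>] K0_pos
    by (auto simp: s_def norm_semigroup_Qproj_F_le)
  moreover have "norm (Qproj e M (S h (qn n s))) \<le> exp (- lam M * h) * norm (qn n s)"
    using \<open>h > 0\<close> by (intro norm_Qproj_semigroup_le) simp
  moreover have "\<dots> \<le> exp (- lam M * h) * (K0 / lam N)"
    by (intro mult_left_mono norm_qn_le[OF s]) simp
  moreover have "Qproj e M (qn n t) = Qproj e M (S h (qn n s)) + Qproj e M (qn n t - S h (qn n s))"
    by (simp add: Qproj_diff)
  ultimately show ?thesis
    using norm_triangle_ineq[of "Qproj e M (S h (qn n s))" "Qproj e M (qn n t - S h (qn n s))"]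
      norm_Qproj_le[of M "qn n t - S h (qn n s)"] Qproj_U_high[OF M t]
    by (simp add: s_def)
next
  case False
  have "((\<lambda>\<tau>. S (t - \<tau>) (Qproj e N (F (U n \<tau>)))) has_integral qn n t) {- real n..t}"
    using has_integral_qn[of "- real n" n t] t by (simp add: qn_start semigroup_zero)
  then have "norm (qn n t) \<le> K0 * (t + real n)"
    using norm_has_integral_le[of _ "qn n t" "- real n" t K0] t K0_pos
    by (auto simp: norm_semigroup_Qproj_F_le)
  also have "\<dots> \<le> K0 * h"
    using False K0_pos by (intro mult_left_mono) auto
  moreover have "0 \<le> exp (- lam M * h) * (K0 / lam N)"
    using K0_pos lam_pos[of N] by simp
  ultimately show ?thesis
    using norm_Qproj_le[of M "qn n t"] unfolding Qproj_U_high[OF M t] by linarith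
qed

lemma high_modes_small:
  assumes "\<epsilon> > 0"
  shows "\<exists>M\<ge>N. \<forall>n t. t \<in> {- real n..0} \<longrightarrow> norm (Qproj e M (U n t)) \<le> \<epsilon>"
proof -
  define h where "h = \<epsilon> / (2 * K0)"
  have "h > 0" "K0 * h = \<epsilon> / 2"
    using assms K0_pos by (auto simp: h_def)
  have "filterlim (\<lambda>M. - (h * lam M)) at_bot sequentially"
    using filterlim_tendsto_pos_mult_at_top[OF tendsto_const \<open>h > 0\<close> lam_at_top]
    by (simp add: filterlim_uminus_at_top)
  then have "((\<lambda>M. exp (- (h * lam M)) * (K0 / lam N)) \<longlongrightarrow> 0 * (K0 / lam N)) sequentially"
    by (intro tendsto_mult tendsto_const filterlim_compose[OF exp_at_bot])
  then have "\<forall>\<^sub>F M in sequentially. exp (- (h * lam M)) * (K0 / lam N) < \<epsilon> / 2 \<and> M \<ge> N"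
    using assms by (intro eventually_conj order_tendstoD eventually_ge_at_top) auto
  then obtain M where M: "exp (- (h * lam M)) * (K0 / lam N) < \<epsilon> / 2" "M \<ge> N"
    unfolding eventually_sequentially by blast
  have "norm (Qproj e M (U n t)) \<le> \<epsilon>" if "t \<in> {- real n..0}" for n t
    using norm_Qproj_U_le[OF M(2) \<open>h > 0\<close> that] M(1) \<open>K0 * h = \<epsilon> / 2\<close> by (simp add: mult.commute)
  with M(2) show ?thesis
    by blast
qed

lemma norm_U_diff_le:
  assumes M: "M \<ge> N" and s: "s \<in> {- m..0}" and t: "t \<in> {- m..0}" and "s \<le> t" and "m \<le> real n"
  shows "norm (U n t - U n s) \<le> (lam M * U_bound m + K0) * (t - s) + norm (Qproj e M (U n s))"
proof -
  define h where "h = t - s"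
  have "h \<ge> 0"
    using \<open>s \<le> t\<close> by (simp add: h_def)
  have sn: "s \<in> {- real n..0}" and tn: "t \<in> {- real n..0}"
    using s t \<open>m \<le> real n\<close> by auto
  have "U n t - U n s = Pproj e M (S h (U n s) - U n s) + Qproj e M (S h (U n s) - U n s)
      + (U n t - S h (U n s))"
    by (simp add: Pproj_add_Qproj)
  then have "norm (U n t - U n s) \<le> norm (Pproj e M (S h (U n s) - U n s))
      + norm (Qproj e M (S h (U n s) - U n s)) + norm (U n t - S h (U n s))"
    by (simp only: norm_triangle_le[OF add_mono[OF norm_triangle_ineq order_refl]])
  also have "\<dots> \<le> (lam M * h) * U_bound m + norm (Qproj e M (U n s)) + K0 * h"
  proof (intro add_mono)
    have "norm (Pproj e M (S h (U n s) - U n s)) \<le> (lam M * h) * norm (U n s)"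
      by (rule norm_Pproj_semigroup_minus_le[OF \<open>h \<ge> 0\<close>])
    also have "\<dots> \<le> (lam M * h) * U_bound m"
      using lam_pos[of M] \<open>h \<ge> 0\<close> by (intro mult_left_mono norm_U_le[OF s \<open>m \<le> real n\<close>]) simp
    finally show "norm (Pproj e M (S h (U n s) - U n s)) \<le> (lam M * h) * U_bound m" .
    show "norm (Qproj e M (S h (U n s) - U n s)) \<le> norm (Qproj e M (U n s))"
      by (rule norm_Qproj_semigroup_minus_le[OF \<open>h \<ge> 0\<close>])
    show "norm (U n t - S h (U n s)) \<le> K0 * h"
      using norm_has_integral_le[OF has_integral_U[OF sn tn \<open>s \<le> t\<close>] \<open>s \<le> t\<close>] K0_pos
      by (auto simp: h_def norm_semigroup_F_le)
  qed
  finally show ?thesis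
    by (simp add: h_def algebra_simps)
qed

lemma U_equicontinuous:
  assumes "\<epsilon> > 0" and "m \<ge> 0"
  shows "\<exists>\<delta>>0. \<forall>n s t. m \<le> real n \<longrightarrow> s \<in> {- m..0} \<longrightarrow> t \<in> {- m..0} \<longrightarrow> \<bar>t - s\<bar> < \<delta>
           \<longrightarrow> norm (U n t - U n s) \<le> \<epsilon>"
proof -
  obtain M where "M \<ge> N" and high: "\<And>n t. t \<in> {- real n..0} \<Longrightarrow> norm (Qproj e M (U n t)) \<le> \<epsilon> / 2"
    using high_modes_small[of "\<epsilon> / 2"] assms by auto
  define C where "C = lam M * U_bound m + K0"
  have "C > 0"
    unfolding C_def using lam_pos[of M] U_bound_pos[OF \<open>m \<ge> 0\<close>] K0_pos by (intro add_nonneg_pos) auto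
  have close: "norm (U n t - U n s) \<le> \<epsilon>"
    if "m \<le> real n" "s \<in> {- m..0}" "t \<in> {- m..0}" "s \<le> t" "t - s < \<epsilon> / 2 / C" for n s t
  proof -
    have "norm (U n t - U n s) \<le> C * (t - s) + norm (Qproj e M (U n s))"
      unfolding C_def using norm_U_diff_le[OF \<open>M \<ge> N\<close> that(2-4,1)] .
    also have "C * (t - s) \<le> \<epsilon> / 2"
      using that(5) \<open>C > 0\<close> by (simp add: field_simps)
    finally show ?thesis
      using high[of s n] that(1,2) by simp
  qed
  show ?thesis
  proof (intro exI conjI allI impI)
    fix n s t
    assume "m \<le> real n" "s \<in> {- m..0}" "t \<in> {- m..0}" "\<bar>t - s\<bar> < \<epsilon> / 2 / C"
    then show "norm (U n t - U n s) \<le> \<epsilon>"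
      using close[of n s t] close[of n t s] by (cases "s \<le> t") (auto simp: norm_minus_commute)
  qed (use assms \<open>C > 0\<close> in simp)
qed

end

section \<open>Compactness\<close>

lemma Cauchy_finite_family:
  fixes X :: "nat \<Rightarrow> 'i \<Rightarrow> 'a::metric_space"
  assumes "finite G" and "\<And>y. y \<in> G \<Longrightarrow> Cauchy (\<lambda>n. X n y)" and "\<eta> > 0"
  shows "\<exists>L. \<forall>a\<ge>L. \<forall>b\<ge>L. \<forall>y\<in>G. dist (X a y) (X b y) < \<eta>"
  using assms
proof (induction G rule: finite_induct)
  case (insert y G)
  obtain L1 where L1: "\<forall>a\<ge>L1. \<forall>b\<ge>L1. \<forall>y\<in>G. dist (X a y) (X b y) < \<eta>"
    using insert by blast
  obtain L2 where L2: "\<forall>a\<ge>L2. \<forall>b\<ge>L2. dist (X a y) (X b y) < \<eta>"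
    using metric_CauchyD[OF insert.prems(1) \<open>\<eta> > 0\<close>] by blast
  show ?case
    using L1 L2 by (intro exI[of _ "max L1 L2"]) auto
qed simp

definition grid :: "nat \<Rightarrow> nat \<Rightarrow> real" where "grid j K = - real j / real (Suc K)"

lemma grid_mem_interval:
  assumes "j \<le> m * Suc K"
  shows "grid j K \<in> {- real m..0}"
proof -
  have "real j \<le> real m * real (Suc K)"
    using assms by (metis of_nat_le_iff of_nat_mult)
  then show ?thesis
    by (simp add: grid_def divide_le_eq)
qed

lemma grid_mem: "grid j K \<in> {- real j..0}"
  by (rule grid_mem_interval) simp

lemma grid_approx:
  assumes x: "x \<in> {- real m..0}"
  obtains j where "j \<le> m * Suc K" "\<bar>x - grid j K\<bar> < 1 / real (Suc K)"
proof
  define c where "c = real (Suc K)"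
  define j where "j = nat \<lfloor>- x * c\<rfloor>"
  have "c > 0" "- x * c \<ge> 0"
    using x by (auto simp: c_def mult_nonpos_nonneg)
  then have j: "real j \<le> - x * c" "- x * c < real j + 1"
    unfolding j_def by linarith+
  have "- x * c \<le> real m * c"
    using x \<open>c > 0\<close> by (intro mult_right_mono) auto
  then show "j \<le> m * Suc K"
    using j unfolding c_def by (metis of_nat_le_iff of_nat_mult order_trans)
  have "grid j K = - real j / c"
    by (simp add: grid_def c_def)
  moreover have "real j / c \<le> - x" "- x < real j / c + 1 / c"
    using j \<open>c > 0\<close> by (simp_all add: field_simps)
  ultimately show "\<bar>x - grid j K\<bar> < 1 / real (Suc K)"
    by (auto simp: c_def)
qed

context approximating_solutions
begin

text \<open>Dividing by \<open>U_bound j\<close> makes the countable family uniformly bounded.\<close>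
lemma grid_coordinates_convergent_subsequence:
  obtains r where "strict_mono r" "\<And>j K k. convergent (\<lambda>n. U (r n) (grid j K) \<bullet> e k)"
proof -
  define f where "f n = (\<lambda>(j, K, k). if j \<le> n then (U n (grid j K) \<bullet> e k) / U_bound (real j) else 0)"
    for n :: nat
  have f_bound: "norm (f n x) \<le> 1" for n x
  proof -
    obtain j K k where x: "x = (j, K, k)"
      by (cases x) auto
    have "\<bar>U n (grid j K) \<bullet> e k\<bar> \<le> U_bound (real j)" if "j \<le> n"
    proof -
      have "\<bar>U n (grid j K) \<bullet> e k\<bar> \<le> norm (U n (grid j K))"
        using Cauchy_Schwarz_ineq2[of "U n (grid j K)" "e k"] by simp
      also have "\<dots> \<le> U_bound (real j)"
        using that by (intro norm_U_le[OF grid_mem]) simp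
      finally show ?thesis .
    qed
    then show ?thesis
      using U_bound_pos[of "real j"] by (simp add: f_def x abs_div)
  qed
  obtain r where r: "strict_mono r" and conv: "\<And>x. x \<in> UNIV \<Longrightarrow> \<exists>l. (\<lambda>n. f (r n) x) \<longlonglongrightarrow> l"
    using function_convergent_subsequence[of "UNIV :: (nat \<times> nat \<times> nat) set" f 1] f_bound by auto
  show ?thesis
  proof (rule that[OF r])
    fix j K k
    obtain l where "(\<lambda>n. f (r n) (j, K, k)) \<longlonglongrightarrow> l"
      using conv by blast
    then have "(\<lambda>n. f (r n) (j, K, k) * U_bound (real j)) \<longlonglongrightarrow> l * U_bound (real j)"
      by (intro tendsto_intros)
    moreover have "\<forall>\<^sub>F n in sequentially. f (r n) (j, K, k) * U_bound (real j) = U (r n) (grid j K) \<bullet> e k"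
      using eventually_ge_at_top[of j]
    proof eventually_elim
      case (elim n)
      then have "j \<le> r n"
        using seq_suble[OF r, of n] by linarith
      then show ?case
        using U_bound_pos[of "real j"] by (simp add: f_def)
    qed
    ultimately have "(\<lambda>n. U (r n) (grid j K) \<bullet> e k) \<longlonglongrightarrow> l * U_bound (real j)"
      by (rule Lim_transform_eventually)
    then show "convergent (\<lambda>n. U (r n) (grid j K) \<bullet> e k)"
      by (rule convergentI)
  qed
qed

lemma norm_U_diff_le_low_modes:
  assumes high: "\<And>n t. t \<in> {- real n..0} \<Longrightarrow> norm (Qproj e M (U n t)) \<le> \<eta>"
    and "t \<in> {- real n..0}" "t \<in> {- real n'..0}"
  shows "norm (U n t - U n' t) \<le> (\<Sum>k<M. \<bar>U n t \<bullet> e k - U n' t \<bullet> e k\<bar>) + 2 * \<eta>"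
proof -
  have "norm (Qproj e M (U n t - U n' t)) \<le> 2 * \<eta>"
    using norm_triangle_ineq4[of "Qproj e M (U n t)" "Qproj e M (U n' t)"]
      high[OF assms(2)] high[OF assms(3)] by (simp add: Qproj_diff)
  then show ?thesis
    using norm_le_sum_coordinates_Qproj[of "U n t - U n' t" M] by (simp add: inner_diff_left)
qed

lemma uniformly_Cauchy_on_grid:
  assumes r: "strict_mono r" and conv: "\<And>j K k. convergent (\<lambda>n. U (r n) (grid j K) \<bullet> e k)"
    and "\<epsilon> > 0"
  shows "\<exists>L. \<forall>a\<ge>L. \<forall>b\<ge>L. \<forall>j\<le>m * Suc K. norm (U (r a) (grid j K) - U (r b) (grid j K)) \<le> \<epsilon>"
proof -
  obtain M where high: "\<And>n t. t \<in> {- real n..0} \<Longrightarrow> norm (Qproj e M (U n t)) \<le> \<epsilon> / 3"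
    using high_modes_small[of "\<epsilon> / 3"] \<open>\<epsilon> > 0\<close> by auto
  define \<eta> where "\<eta> = \<epsilon> / 3 / (real M + 1)"
  have "\<eta> > 0" "real M * \<eta> \<le> \<epsilon> / 3"
    using \<open>\<epsilon> > 0\<close> by (auto simp: \<eta>_def field_simps)
  have "\<exists>L. \<forall>a\<ge>L. \<forall>b\<ge>L. \<forall>y\<in>{..m * Suc K} \<times> {..<M}.
      dist (U (r a) (grid (fst y) K) \<bullet> e (snd y)) (U (r b) (grid (fst y) K) \<bullet> e (snd y)) < \<eta>"
    using conv \<open>\<eta> > 0\<close> by (intro Cauchy_finite_family) (auto simp: convergent_Cauchy)
  then obtain L where L: "\<And>a b j k. a \<ge> L \<Longrightarrow> b \<ge> L \<Longrightarrow> j \<le> m * Suc K \<Longrightarrow> k < M \<Longrightarrow>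
      \<bar>U (r a) (grid j K) \<bullet> e k - U (r b) (grid j K) \<bullet> e k\<bar> < \<eta>"
    by (fastforce simp: dist_real_def)
  have "norm (U (r a) (grid j K) - U (r b) (grid j K)) \<le> \<epsilon>"
    if "a \<ge> max L m" "b \<ge> max L m" "j \<le> m * Suc K" for a b j
  proof -
    have "grid j K \<in> {- real (r a)..0}" "grid j K \<in> {- real (r b)..0}"
      using grid_mem_interval[OF \<open>j \<le> m * Suc K\<close>] seq_suble[OF r, of a] seq_suble[OF r, of b] that
      by auto
    moreover have "(\<Sum>k<M. \<bar>U (r a) (grid j K) \<bullet> e k - U (r b) (grid j K) \<bullet> e k\<bar>) \<le> (\<Sum>k<M. \<eta>)"
      using L[of a b j] that by (intro sum_mono) (simp add: less_imp_le)
    ultimately show ?thesis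
      using norm_U_diff_le_low_modes[OF high, of "grid j K" "r a" "r b"] \<open>real M * \<eta> \<le> \<epsilon> / 3\<close>
      by simp
  qed
  then show ?thesis
    by blast
qed

text \<open>Arzela-Ascoli, with the compactness of the range replaced by the uniform smallness of the
  high modes.\<close>
lemma uniformly_Cauchy_subsequence:
  assumes r: "strict_mono r" and conv: "\<And>j K k. convergent (\<lambda>n. U (r n) (grid j K) \<bullet> e k)"
  shows "uniformly_Cauchy_on {- real m..0} (\<lambda>n. U (r n))"
proof (rule uniformly_Cauchy_onI)
  fix \<epsilon> :: real assume "\<epsilon> > 0"
  obtain \<delta> where "\<delta> > 0" and equi: "\<And>n s t. real m \<le> real n \<Longrightarrow> s \<in> {- real m..0} \<Longrightarrow>
      t \<in> {- real m..0} \<Longrightarrow> \<bar>t - s\<bar> < \<delta> \<Longrightarrow> norm (U n t - U n s) \<le> \<epsilon> / 4"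
    using U_equicontinuous[of "\<epsilon> / 4" "real m"] \<open>\<epsilon> > 0\<close> by auto
  obtain K where K: "1 / real (Suc K) < \<delta>"
    using reals_Archimedean[OF \<open>\<delta> > 0\<close>] by (auto simp: inverse_eq_divide)
  obtain L where L: "\<And>a b j. a \<ge> L \<Longrightarrow> b \<ge> L \<Longrightarrow> j \<le> m * Suc K \<Longrightarrow>
      norm (U (r a) (grid j K) - U (r b) (grid j K)) \<le> \<epsilon> / 4"
    using uniformly_Cauchy_on_grid[OF r conv, of "\<epsilon> / 4" m K] \<open>\<epsilon> > 0\<close> by auto
  have "dist (U (r a) x) (U (r b) x) < \<epsilon>"
    if "a \<ge> max L m" "b \<ge> max L m" "x \<in> {- real m..0}" for a b x
  proof -
    obtain j where j: "j \<le> m * Suc K" "\<bar>x - grid j K\<bar> < 1 / real (Suc K)"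
      using grid_approx[OF \<open>x \<in> {- real m..0}\<close>] .
    have "real m \<le> real (r a)" "real m \<le> real (r b)"
      using seq_suble[OF r, of a] seq_suble[OF r, of b] that by auto
    then have "norm (U (r a) x - U (r a) (grid j K)) \<le> \<epsilon> / 4"
      and "norm (U (r a) (grid j K) - U (r b) (grid j K)) \<le> \<epsilon> / 4"
      and "norm (U (r b) (grid j K) - U (r b) x) \<le> \<epsilon> / 4"
      using equi grid_mem_interval[OF j(1)] j K L[OF _ _ j(1), of a b] that
      by (auto simp: abs_minus_commute)
    then have "norm (U (r a) x - U (r b) x) \<le> 3 * (\<epsilon> / 4)"
      using norm_triangle_le[OF add_mono[OF norm_triangle_ineq order_refl],
          of "U (r a) x - U (r a) (grid j K)" "U (r a) (grid j K) - U (r b) (grid j K)"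
             "U (r b) (grid j K) - U (r b) x"]
      by simp
    then show ?thesis
      using \<open>\<epsilon> > 0\<close> by (simp add: dist_norm)
  qed
  then show "\<exists>L. \<forall>x\<in>{- real m..0}. \<forall>a\<ge>L. \<forall>b\<ge>L. dist (U (r a) x) (U (r b) x) < \<epsilon>"
    by blast
qed

lemma uniform_limit_subsequence:
  obtains r u where "strict_mono r" "\<And>m::nat. uniform_limit {- real m..0} (\<lambda>n. U (r n)) u sequentially"
proof -
  obtain r where r: "strict_mono r" and conv: "\<And>j K k. convergent (\<lambda>n. U (r n) (grid j K) \<bullet> e k)"
    using grid_coordinates_convergent_subsequence by blast
  define u where "u t = lim (\<lambda>n. U (r n) t)" for t
  have "uniform_limit {- real m..0} (\<lambda>n. U (r n)) u sequentially" for m :: nat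
  proof -
    obtain l where l: "uniform_limit {- real m..0} (\<lambda>n. U (r n)) l sequentially"
      using uniformly_Cauchy_subsequence[OF r conv, of m]
      unfolding uniformly_convergent_eq_Cauchy[symmetric] uniformly_convergent_on_def by blast
    moreover have "l t = u t" if "t \<in> {- real m..0}" for t
      using tendsto_uniform_limitI[OF l that] unfolding u_def by (simp add: limI)
    ultimately show ?thesis
      using uniform_limit_cong'[of "{- real m..0}" "\<lambda>n. U (r n)" "\<lambda>n. U (r n)" l u] by blast
  qed
  with r that show ?thesis
    by blast
qed

end

section \<open>The limit solution\<close>

lemma compact_nonpos_subset_interval:
  assumes "compact K" "K \<subseteq> {..0}"
  obtains m :: nat where "K \<subseteq> {- real m..0}"
proof -
  obtain b where b: "\<And>x. x \<in> K \<Longrightarrow> norm x \<le> b"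
    using compact_imp_bounded[OF assms(1)] unfolding bounded_iff by blast
  have "K \<subseteq> {- real (nat \<lceil>b\<rceil>)..0}"
  proof
    fix x assume "x \<in> K"
    then have "- x \<le> b"
      using b[of x] by simp
    also have "b \<le> real (nat \<lceil>b\<rceil>)"
      by linarith
    finally have "- x \<le> real (nat \<lceil>b\<rceil>)" .
    then show "x \<in> {- real (nat \<lceil>b\<rceil>)..0}"
      using \<open>x \<in> K\<close> assms(2) by auto
  qed
  then show ?thesis
    using that by blast
qed

lemma nonpos_mem_interval: "(x::real) \<le> 0 \<Longrightarrow> x \<in> {- real (nat \<lceil>- x\<rceil>)..0}"
  by auto linarith

locale approximating_limit = approximating_solutions e lam N F K0 K1 R p0 pn qn
  for e :: "nat \<Rightarrow> 'a::{real_inner,complete_space}" and lam N F K0 K1 R p0 pn qn +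
  fixes r :: "nat \<Rightarrow> nat" and u :: "real \<Rightarrow> 'a"
  assumes strict_mono_r: "strict_mono r"
    and uniform_limit_U: "\<And>m::nat. uniform_limit {- real m..0} (\<lambda>n. U (r n)) u sequentially"
begin

lemma eventually_subset_interval: "\<forall>\<^sub>F n in sequentially. {- real m..0} \<subseteq> {- real (r n)..0}"
  using eventually_ge_at_top[of m]
proof eventually_elim
  case (elim n)
  then show ?case
    using seq_suble[OF strict_mono_r, of n] by simp
qed

lemma uniform_limit_U_compact:
  assumes "compact K" "K \<subseteq> {..0}"
  shows "uniform_limit K (\<lambda>n. U (r n)) u sequentially"
proof -
  obtain m where "K \<subseteq> {- real m..0}"
    using compact_nonpos_subset_interval[OF assms] .
  then show ?thesis
    using uniform_limit_on_subset[OF uniform_limit_U] by blast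
qed

lemma U_tendsto: "t \<le> 0 \<Longrightarrow> (\<lambda>n. U (r n) t) \<longlonglongrightarrow> u t"
  using uniform_limit_U_compact[of "{t}"] by simp

lemma uniform_limit_pn:
  assumes "compact K" "K \<subseteq> {..0}"
  shows "uniform_limit K (\<lambda>n. pn (r n)) (\<lambda>t. Pproj e N (u t)) sequentially"
proof -
  obtain m where K: "K \<subseteq> {- real m..0}"
    using compact_nonpos_subset_interval[OF assms] .
  have "\<forall>\<^sub>F n in sequentially. \<forall>t\<in>K. Pproj e N (U (r n) t) = pn (r n) t"
    using eventually_subset_interval[of m] by eventually_elim (use K Pproj_U in auto)
  moreover have "uniform_limit K (\<lambda>n t. Pproj e N (U (r n) t)) (\<lambda>t. Pproj e N (u t)) sequentially"
    by (rule bounded_linear.uniform_limit[OF bounded_linear_Pproj uniform_limit_U_compact[OF assms]])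
  ultimately show ?thesis
    using uniform_limit_cong[where f = "\<lambda>n t. Pproj e N (U (r n) t)" and g = "\<lambda>n. pn (r n)"] by blast
qed

lemma uniform_limit_qn:
  assumes "compact K" "K \<subseteq> {..0}"
  shows "uniform_limit K (\<lambda>n. qn (r n)) (\<lambda>t. Qproj e N (u t)) sequentially"
proof -
  obtain m where K: "K \<subseteq> {- real m..0}"
    using compact_nonpos_subset_interval[OF assms] .
  have "\<forall>\<^sub>F n in sequentially. \<forall>t\<in>K. Qproj e N (U (r n) t) = qn (r n) t"
    using eventually_subset_interval[of m] by eventually_elim (use K Qproj_U in auto)
  moreover have "uniform_limit K (\<lambda>n t. Qproj e N (U (r n) t)) (\<lambda>t. Qproj e N (u t)) sequentially"
    by (rule bounded_linear.uniform_limit[OF bounded_linear_Qproj uniform_limit_U_compact[OF assms]])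
  ultimately show ?thesis
    using uniform_limit_cong[where f = "\<lambda>n t. Qproj e N (U (r n) t)" and g = "\<lambda>n. qn (r n)"] by blast
qed

lemma continuous_on_limit: "continuous_on {..0} u"
  unfolding continuous_on_eq_continuous_within
proof
  fix t :: real assume "t \<in> {..0}"
  define m where "m = nat \<lceil>1 - t\<rceil>"
  have "- real m < t"
    unfolding m_def by linarith
  have "\<forall>\<^sub>F n in sequentially. continuous_on {- real m..0} (U (r n))"
    using eventually_subset_interval[of m]
    by eventually_elim
      (auto simp: U_def intro!: continuous_on_add continuous_on_subset[OF continuous_on_pn]
        continuous_on_subset[OF continuous_on_qn])
  then have "continuous (at t within {- real m..0}) u"
    using uniform_limit_theorem[OF _ uniform_limit_U] \<open>t \<in> {..0}\<close> \<open>- real m < t\<close>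
    by (auto simp: continuous_on_eq_continuous_within)
  moreover have "at t within {..0} = at t within {- real m..0}"
    using \<open>- real m < t\<close> by (intro at_within_nhd[of _ "{- real m<..}"]) auto
  ultimately show "continuous (at t within {..0}) u"
    by simp
qed

lemma has_integral_limit:
  assumes "s \<le> t" "t \<le> 0"
  shows "((\<lambda>\<tau>. S (t - \<tau>) (F (u \<tau>))) has_integral (u t - S (t - s) (u s))) {s..t}"
proof (rule has_integral_uniform_limit)
  define m where "m = nat \<lceil>- s\<rceil>"
  have st: "s \<in> {- real m..0}" "t \<in> {- real m..0}"
    using assms unfolding m_def by auto linarith+
  show "\<forall>\<^sub>F n in sequentially. ((\<lambda>\<tau>. S (t - \<tau>) (F (U (r n) \<tau>))) has_integral
      (U (r n) t - S (t - s) (U (r n) s))) {s..t}"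
    using eventually_subset_interval[of m]
    by eventually_elim (use st \<open>s \<le> t\<close> in \<open>auto intro: has_integral_U\<close>)
  show "uniform_limit {s..t} (\<lambda>n \<tau>. S (t - \<tau>) (F (U (r n) \<tau>))) (\<lambda>\<tau>. S (t - \<tau>) (F (u \<tau>))) sequentially"
  proof (rule uniform_limitI)
    fix \<epsilon> :: real assume "\<epsilon> > 0"
    then have "\<forall>\<^sub>F n in sequentially. \<forall>\<tau>\<in>{s..t}. dist (U (r n) \<tau>) (u \<tau>) < \<epsilon> / K1"
      using uniform_limit_U_compact[of "{s..t}"] assms K1_pos by (intro uniform_limitD) auto
    then show "\<forall>\<^sub>F n in sequentially. \<forall>\<tau>\<in>{s..t}. dist (S (t - \<tau>) (F (U (r n) \<tau>))) (S (t - \<tau>) (F (u \<tau>))) < \<epsilon>"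
    proof eventually_elim
      case (elim n)
      show ?case
      proof
        fix \<tau> assume "\<tau> \<in> {s..t}"
        then have "dist (S (t - \<tau>) (F (U (r n) \<tau>))) (S (t - \<tau>) (F (u \<tau>))) \<le> K1 * dist (U (r n) \<tau>) (u \<tau>)"
          by (intro dist_semigroup_F_le) simp
        also have "\<dots> < \<epsilon>"
          using elim \<open>\<tau> \<in> {s..t}\<close> K1_pos by (simp add: field_simps)
        finally show "dist (S (t - \<tau>) (F (U (r n) \<tau>))) (S (t - \<tau>) (F (u \<tau>))) < \<epsilon>" .
      qed
    qed
  qed
  show "(\<lambda>n. U (r n) t - S (t - s) (U (r n) s)) \<longlonglongrightarrow> u t - S (t - s) (u s)"
    using assms by (intro tendsto_diff U_tendsto bounded_linear.tendsto[OF bounded_linear_semigroup]) auto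
qed

lemma mild_solution_limit: "mild_solution e lam F {..0} u"
  unfolding mild_solution_def using continuous_on_limit has_integral_limit by auto

lemma norm_Qproj_limit_le:
  assumes "t \<le> 0"
  shows "norm (Qproj e N (u t)) \<le> K0 / lam N"
proof (rule tendsto_upperbound)
  show "(\<lambda>n. norm (Qproj e N (U (r n) t))) \<longlonglongrightarrow> norm (Qproj e N (u t))"
    using assms by (intro tendsto_norm bounded_linear.tendsto[OF bounded_linear_Qproj] U_tendsto)
  show "\<forall>\<^sub>F n in sequentially. norm (Qproj e N (U (r n) t)) \<le> K0 / lam N"
    using eventually_subset_interval[of "nat \<lceil>- t\<rceil>"]
  proof eventually_elim
    case (elim n)
    then have "t \<in> {- real (r n)..0}"
      using nonpos_mem_interval[OF assms] by blast
    then show ?case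
      using Qproj_U norm_qn_le by simp
  qed
qed simp

end

theorem lemma2p2:
  fixes e :: "nat \<Rightarrow> 'a::{real_inner,complete_space}"
    and lam :: "nat \<Rightarrow> real" and N :: nat
    and F :: "'a \<Rightarrow> 'a" and K0 K1 R :: real
    and p0 :: 'a and pn qn :: "nat \<Rightarrow> real \<Rightarrow> 'a"
  assumes "spectral_data e lam N"
    and "nonlinearity lam N F K0 K1 R"
    and "Pproj e N p0 = p0"
    and "\<And>n. mild_solution_PQ e lam N F {- real n..0} (pn n) (qn n)"
    and "\<And>n. pn n 0 = p0"
    and "\<And>n. qn n (- real n) = 0"
  shows "\<exists>r p q. strict_mono r \<and>
     (\<forall>K. compact K \<and> K \<subseteq> {..0} \<longrightarrow>
        uniform_limit K (\<lambda>k. pn (r k)) p sequentially \<and>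
        uniform_limit K (\<lambda>k. qn (r k)) q sequentially) \<and>
     mild_solution e lam F {..0} (\<lambda>t. p t + q t) \<and>
     (\<forall>t\<le>0. Pproj e N (p t + q t) = p t \<and> Qproj e N (p t + q t) = q t) \<and>
     bounded (q ` {..0}) \<and>
     ((\<lambda>k. pn (r k) 0) \<longlonglongrightarrow> p 0) \<and>
     ((\<lambda>k. qn (r k) 0) \<longlonglongrightarrow> q 0)"
proof -
  interpret approximating_solutions e lam N F K0 K1 R p0 pn qn
    using assms(1,2,4-6) by unfold_locales
  obtain r u where "strict_mono r" "\<And>m::nat. uniform_limit {- real m..0} (\<lambda>n. U (r n)) u sequentially"
    using uniform_limit_subsequence by blast
  then interpret approximating_limit e lam N F K0 K1 R p0 pn qn r u
    by unfold_locales
  define p q where "p = (\<lambda>t. Pproj e N (u t))" and "q = (\<lambda>t. Qproj e N (u t))"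
  have u: "p t + q t = u t" for t
    by (simp add: p_def q_def Pproj_add_Qproj)
  have "uniform_limit K (\<lambda>k. pn (r k)) p sequentially \<and> uniform_limit K (\<lambda>k. qn (r k)) q sequentially"
    if "compact K" "K \<subseteq> {..0}" for K
    using uniform_limit_pn[OF that] uniform_limit_qn[OF that] by (simp add: p_def q_def)
  moreover have "mild_solution e lam F {..0} (\<lambda>t. p t + q t)"
    using mild_solution_limit by (simp add: u)
  moreover have "\<forall>t\<le>0. Pproj e N (p t + q t) = p t \<and> Qproj e N (p t + q t) = q t"
    unfolding u by (simp add: p_def q_def)
  moreover have "bounded (q ` {..0})"
    using norm_Qproj_limit_le unfolding bounded_iff q_def by blast
  moreover have "(\<lambda>k. pn (r k) 0) \<longlonglongrightarrow> p 0" "(\<lambda>k. qn (r k) 0) \<longlonglongrightarrow> q 0"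
    using uniform_limit_pn[of "{0}"] uniform_limit_qn[of "{0}"] by (simp_all add: p_def q_def)
  ultimately show ?thesis
    using strict_mono_r by blast
qed

end
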